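(* Let $\mathcal{X}=(\mathcal{X}_t)_{t\ge0}$ be a continuous-time Markov chain on a finite state space $E$ with rate matrix $(Q(i,j))_{i,j\in E}$, and let $W:E\to\mathbb{R}$ be such that $Q(i,j)>0$ implies $W(j)>W(i)$ (a Markov chain with strictly monotone orbits with respect to $W$). Define $\Psi:\mathbb{R}^E\to\mathbb{R}$ by $\Psi(p)=\sum_{i\in E}p(i)W(i)$. Then the forward equation \[ \dot p_t=\sum_{i\in E}\sum_{j\in E}p_t(i)Q(i,j)(j-i) \] for the law $p_t\in\mathbb{R}^E$ of $\mathcal{X}_t$ is equivalent to \[ \dot p_t=K(p_t)\nabla\Psi(p_t), \] where $K$ takes values in the symmetric positive semi-definite $E\times E$ matrices, is continuous on the set $\mathcal{P}(E)$ of probability vectors on $E$, and is smooth on its interior.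
   Context: Vectors in $\mathbb{R}^E$ are written as formal sums $p=\sum_{i\in E}p(i)\,i$, each $i\in E$ being identified with the corresponding standard basis vector; $\nabla$ is the Euclidean gradient on $\mathbb{R}^E$. A rate matrix has nonnegative off-diagonal entries and rows summing to zero. *)

theory Defs
  imports "HOL-Analysis.Analysis"
begin

definition rate_matrix :: "real^'e^'e \<Rightarrow> bool" where
  "rate_matrix Q \<longleftrightarrow> (\<forall>i j. i \<noteq> j \<longrightarrow> 0 \<le> Q$i$j) \<and> (\<forall>i. (\<Sum>j\<in>UNIV. Q$i$j) = 0)"

definition prob_vectors :: "(real^'e::finite) set" where
  "prob_vectors = {p. (\<forall>i. 0 \<le> p$i) \<and> (\<Sum>i\<in>UNIV. p$i) = 1}"

definition prob_vectors_interior :: "(real^'e::finite) set" where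
  "prob_vectors_interior = {p. (\<forall>i. 0 < p$i) \<and> (\<Sum>i\<in>UNIV. p$i) = 1}"

definition gradient :: "(real^'e::finite \<Rightarrow> real) \<Rightarrow> real^'e \<Rightarrow> real^'e" where
  "gradient f p = (THE g. (f has_derivative (\<lambda>h. g \<bullet> h)) (at p))"

text \<open>C-infinity on a set U: all iterated partial derivatives D ds (ds a list of
  basis directions) exist, are continuous on U, and each is Frechet differentiable
  at every point of U with partials given by the next level.\<close>
definition smooth_on :: "'a::euclidean_space set \<Rightarrow> ('a \<Rightarrow> 'b::real_normed_vector) \<Rightarrow> bool" where
  "smooth_on U f \<longleftrightarrow> (\<exists>D. D [] = f \<and>
     (\<forall>ds. set ds \<subseteq> Basis \<longrightarrow> continuous_on U (D ds) \<and>
        (\<forall>x\<in>U. (D ds has_derivative (\<lambda>h. \<Sum>b\<in>Basis. (h \<bullet> b) *\<^sub>R D (b # ds) x)) (at x))))"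

text \<open>K is smooth on the interior of P(E): smooth on some open neighbourhood of it.\<close>
definition smooth_near :: "'a::euclidean_space set \<Rightarrow> ('a \<Rightarrow> 'b::real_normed_vector) \<Rightarrow> bool" where
  "smooth_near S f \<longleftrightarrow> (\<exists>U. open U \<and> S \<subseteq> U \<and> smooth_on U f)"

definition sym_psd :: "real^'e^'e \<Rightarrow> bool" where
  "sym_psd A \<longleftrightarrow> transpose A = A \<and> (\<forall>x. 0 \<le> x \<bullet> (A *v x))"

text \<open>Right-hand side of the forward equation, states identified with basis vectors.\<close>
definition forward_field :: "real^'e^'e \<Rightarrow> real^'e \<Rightarrow> real^'e::finite" where
  "forward_field Q p = (\<Sum>i\<in>UNIV. \<Sum>j\<in>UNIV. (p$i * Q$i$j) *\<^sub>R (axis j 1 - axis i 1))"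

end

theory Submission
  imports Defs
begin

text \<open>
  Each transition i \<rightarrow> j moves mass along the vector j - i, and \<nabla>\<Psi> = W pairs
  that vector with the increment W j - W i, which is positive whenever Q i j > 0.
  Weighting the outer product of j - i with itself by p i Q i j / (W j - W i) and
  summing over all transitions therefore gives a matrix K(p) with K(p) \<nabla>\<Psi> equal
  to the forward field. For p \<in> P(E) the weights are nonnegative, so K(p) is
  positive semi-definite; and K is linear in p, hence continuous and smooth.
\<close>

lemma linear_imp_smooth_on:
  fixes K :: "'a::euclidean_space \<Rightarrow> 'b::real_normed_vector"
  assumes "linear K"
  shows "smooth_on U K"
proof -
  \<comment> \<open>The derivative of K is K itself, whose partials are constants; higher partials vanish.\<close>
  define D where "D ds = (case ds of [] \<Rightarrow> K | [b] \<Rightarrow> (\<lambda>_. K b) | _ \<Rightarrow> (\<lambda>_. 0))"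
    for ds :: "'a list"
  have bl: "bounded_linear K"
    using assms linear_conv_bounded_linear by blast
  have K_expand: "K h = (\<Sum>b\<in>Basis. (h \<bullet> b) *\<^sub>R K b)" for h
    by (metis (no_types, lifting) assms euclidean_representation linear_scale linear_sum sum.cong)
  have "continuous_on U (D ds) \<and>
        (\<forall>x\<in>U. (D ds has_derivative (\<lambda>h. \<Sum>b\<in>Basis. (h \<bullet> b) *\<^sub>R D (b # ds) x)) (at x))" for ds
  proof (cases ds)
    case Nil
    have "(K has_derivative K) (at x)" for x
      using bl by (rule bounded_linear_imp_has_derivative)
    then show ?thesis
      using Nil bl linear_continuous_on by (simp add: D_def K_expand[symmetric])
  next
    case (Cons b bs)
    then show ?thesis
      by (cases bs) (simp_all add: D_def)
  qed
  moreover have "D [] = K"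
    by (simp add: D_def)
  ultimately show ?thesis
    unfolding smooth_on_def by blast
qed

lemma gradient_eqI:
  assumes "(f has_derivative (\<lambda>h. g \<bullet> h)) (at p)"
  shows "gradient f p = g"
  unfolding gradient_def
proof (rule the_equality)
  fix g' assume "(f has_derivative (\<lambda>h. g' \<bullet> h)) (at p)"
  with assms have "(\<lambda>h. g \<bullet> h) = (\<lambda>h. g' \<bullet> h)"
    by (rule has_derivative_unique)
  then have "(g' - g) \<bullet> (g' - g) = 0"
    by (metis inner_diff_left right_minus_eq)
  then show "g' = g"
    by simp
qed (rule assms)

definition outer_product :: "'a::ab_semigroup_mult^'m \<Rightarrow> 'a^'n \<Rightarrow> 'a^'n^'m" where
  "outer_product v w = (\<chi> a b. v$a * w$b)"

lemma outer_product_mult_vector: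
  fixes v :: "real^'m" and w x :: "real^'n"
  shows "outer_product v w *v x = (w \<bullet> x) *\<^sub>R v"
  by (simp add: vec_eq_iff outer_product_def matrix_vector_mult_def inner_vec_def
      sum_distrib_left mult_ac)

lemma transpose_outer_product: "transpose (outer_product v w) = outer_product w v"
  by (simp add: vec_eq_iff outer_product_def transpose_def mult.commute)

lemma sum_matrix_vector_mult:
  "(\<Sum>k\<in>S. A k) *v x = (\<Sum>k\<in>S. A k *v x)"
  by (induction S rule: infinite_finite_induct) (simp_all add: matrix_vector_mult_add_rdistrib)

lemma sym_psd_outer_product_self: "sym_psd (outer_product v v)"
  by (simp add: sym_psd_def transpose_outer_product outer_product_mult_vector inner_commute)

lemma sym_psd_zero: "sym_psd 0"
  by (simp add: sym_psd_def vec_eq_iff transpose_def)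

lemma sym_psd_add:
  assumes "sym_psd A" and "sym_psd B"
  shows "sym_psd (A + B)"
proof -
  have "transpose (A + B) = transpose A + transpose B"
    by (simp add: vec_eq_iff transpose_def)
  then show ?thesis
    using assms by (simp add: sym_psd_def matrix_vector_mult_add_rdistrib inner_add_right)
qed

lemma sym_psd_scaleR:
  assumes "sym_psd A" and "0 \<le> c"
  shows "sym_psd (c *\<^sub>R A)"
  using assms
  by (simp add: sym_psd_def transpose_scalar scaleR_matrix_vector_assoc[symmetric])

lemma sym_psd_sum:
  assumes "\<And>k. k \<in> S \<Longrightarrow> sym_psd (A k)"
  shows "sym_psd (\<Sum>k\<in>S. A k)"
  using assms
  by (induction S rule: infinite_finite_induct) (simp_all add: sym_psd_zero sym_psd_add)

definition conductance :: "real^'e^'e \<Rightarrow> ('e \<Rightarrow> real) \<Rightarrow> 'e \<Rightarrow> 'e \<Rightarrow> real" where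
  "conductance Q W i j = (if 0 < Q$i$j then Q$i$j / (W j - W i) else 0)"

definition edge_vector :: "'e \<Rightarrow> 'e \<Rightarrow> real^'e::finite" where
  "edge_vector i j = axis j 1 - axis i 1"

definition onsager_matrix :: "real^'e^'e \<Rightarrow> ('e \<Rightarrow> real) \<Rightarrow> real^'e \<Rightarrow> real^'e^'e::finite" where
  "onsager_matrix Q W p =
     (\<Sum>i\<in>UNIV. \<Sum>j\<in>UNIV.
        (p$i * conductance Q W i j) *\<^sub>R outer_product (edge_vector i j) (edge_vector i j))"

lemma conductance_nonneg:
  assumes "\<And>i j. Q$i$j > 0 \<Longrightarrow> W j > W i"
  shows "0 \<le> conductance Q W i j"
  using assms[of i j] by (auto simp: conductance_def)

lemma conductance_mult_increment:
  assumes "rate_matrix Q" and "\<And>i j. Q$i$j > 0 \<Longrightarrow> W j > W i" and "i \<noteq> j"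
  shows "conductance Q W i j * (W j - W i) = Q$i$j"
proof (cases "0 < Q$i$j")
  case True
  then show ?thesis
    using assms(2)[of i j] by (simp add: conductance_def)
next
  case False
  moreover have "0 \<le> Q$i$j"
    using assms(1,3) by (simp add: rate_matrix_def)
  ultimately show ?thesis
    by (simp add: conductance_def)
qed

lemma linear_onsager_matrix: "linear (onsager_matrix Q W)"
  by (rule linearI)
    (simp_all add: onsager_matrix_def distrib_right scaleR_add_left sum.distrib scaleR_sum_right
      mult.assoc)

lemma sym_psd_onsager_matrix:
  assumes "\<And>i j. Q$i$j > 0 \<Longrightarrow> W j > W i" and "\<And>i. 0 \<le> p$i"
  shows "sym_psd (onsager_matrix Q W p)"
  unfolding onsager_matrix_def
  by (intro sym_psd_sum sym_psd_scaleR sym_psd_outer_product_self mult_nonneg_nonneg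
      conductance_nonneg assms)

lemma onsager_matrix_mult_potential:
  assumes "rate_matrix Q" and "\<And>i j. Q$i$j > 0 \<Longrightarrow> W j > W i"
  shows "onsager_matrix Q W p *v (\<chi> i. W i) = forward_field Q p"
proof -
  have "(p$i * conductance Q W i j * (edge_vector i j \<bullet> (\<chi> i. W i))) *\<^sub>R edge_vector i j
          = (p$i * Q$i$j) *\<^sub>R (axis j 1 - axis i 1)" for i j
  proof (cases "i = j")
    case False
    have "edge_vector i j \<bullet> (\<chi> i. W i) = W j - W i"
      by (simp add: edge_vector_def inner_diff_left inner_axis')
    moreover have "conductance Q W i j * (W j - W i) = Q$i$j"
      using conductance_mult_increment assms False by blast
    ultimately show ?thesis
      by (simp add: edge_vector_def mult.assoc)
  qed (simp add: edge_vector_def)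
  then show ?thesis
    by (simp add: onsager_matrix_def forward_field_def sum_matrix_vector_mult
        scaleR_matrix_vector_assoc[symmetric] outer_product_mult_vector)
qed

theorem theorem5p2:
  fixes Q :: "real^'e::finite^'e" and W :: "'e \<Rightarrow> real"
  assumes "rate_matrix Q"
    and "\<And>i j. Q$i$j > 0 \<Longrightarrow> W j > W i"
  defines "\<Psi> \<equiv> (\<lambda>p::real^'e. \<Sum>i\<in>UNIV. p$i * W i)"
  shows "\<exists>K :: real^'e \<Rightarrow> real^'e^'e.
           (\<forall>p\<in>prob_vectors. sym_psd (K p))
         \<and> continuous_on prob_vectors K
         \<and> smooth_near prob_vectors_interior K
         \<and> (\<forall>p\<in>prob_vectors. forward_field Q p = K p *v gradient \<Psi> p)"
proof -
  let ?K = "onsager_matrix Q W"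
  have "\<Psi> = (\<lambda>p. (\<chi> i. W i) \<bullet> p)"
    by (simp add: \<Psi>_def inner_vec_def mult.commute)
  then have grad: "gradient \<Psi> p = (\<chi> i. W i)" for p
    by (metis gradient_eqI bounded_linear_imp_has_derivative bounded_linear_inner_right)
  have "sym_psd (?K p)" if "p \<in> prob_vectors" for p
    using that assms(2) by (simp add: prob_vectors_def sym_psd_onsager_matrix)
  moreover have "continuous_on prob_vectors ?K"
    using linear_onsager_matrix linear_continuous_on linear_conv_bounded_linear by blast
  moreover have "smooth_near prob_vectors_interior ?K"
    unfolding smooth_near_def using linear_imp_smooth_on[OF linear_onsager_matrix] by blast
  moreover have "forward_field Q p = ?K p *v gradient \<Psi> p" for p
    by (simp add: grad onsager_matrix_mult_potential assms(1,2))
  ultimately show ?thesis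
    by blast
qed

end
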